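(* Consider robust dynamic pricing with horizon $T$, valuation $v^\star\in[0,1)$, and feedback corrupted in at most $C$ rounds, and run the meta-algorithm described in the context with an arbitrary commitment subroutine. Then the number of commit failures on incorrect leaves satisfies \[ N_{\textsc{F}} \le \lceil\log_2 T\rceil + C + N_{\textsc{T}}, \] and the regret satisfies \[ R_T \le \sum_{\ell\in\mathcal L} R(\ell) + 3\lceil\log_2 T\rceil + 6C + 3N_{\textsc{T}}. \]
   Context: Robust dynamic pricing: there are $T$ rounds and an unknown valuation $v^\star\in[0,1)$. At each round $t$ the seller posts a price $p_t\in[0,1]$ (chosen, possibly at random, based on past observations). The true sale indicator is $y_t=\mathbbm 1\{p_t\le v^\star\}$; the seller observes $\sigma_t\in\{0,1\}$, and round $t$ is corrupted if $\sigma_t\ne y_t$. At most $C$ rounds are corrupted: $|\{t\in[T]:\sigma_t\neq y_t\}|\le C$. The adversary decides whether to corrupt round $t$ based on the history and on the seller's distribution over $p_t$, but not on the realized $p_t$ (how it corrupts may depend on the realized price). Revenue is $r_t=p_t\,\mathbbm 1\{p_t\le v^\star\}$ and regret is $R_T=T v^\star-\sum_{t=1}^T r_t$. Meta-algorithm: let $D=\lceil\log_2 T\rceil$. Consider the complete binary tree of intervals of depth $D$ whose root is $[0,1)$ and in which each non-leaf node $[L,R)$ has children $[L,M)$ and $[M,R)$ with $M=(L+R)/2$; the nodes at depth $D$ are the leaves, forming the set $\mathcal L$ (each of length at most $1/T$), and $\ell^\star$ denotes the unique leaf containing $v^\star$. The algorithm keeps a current node $I$, initially the root, and repeats until the horizon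 ends: if $I=[L,R)$ is not a leaf, it performs a safety check — post $L$ and observe $\sigma_L$, then post $R$ and observe $\sigma_R$; the check fails if $\sigma_L=0$ or $\sigma_R=1$ (by convention, the query at $L=0$ and the query at $R=1$ always count as passing). If the check fails, $I$ is replaced by its parent; otherwise the algorithm posts $M=(L+R)/2$, observes $\sigma_M$, and replaces $I$ by $[M,R)$ if $\sigma_M=1$ and by $[L,M)$ if $\sigma_M=0$. If $I$ is a leaf, the algorithm calls a commitment subroutine on $I$, which posts prices on consecutive rounds and either continues until the horizon ends or returns FAIL, in which case $I$ is replaced by its parent. For a leaf $\ell$, $Q(\ell)$ is the set of rounds during which the commitment subroutine runs on $\ell$, and $R(\ell)=\sum_{t\in Q(\ell)}(v^\star-p_t\mathbbm 1\{p_t\le v^\star\})$. $N_{\textsc{T}}$ is the number of times the commitment subroutine returns FAIL on $\ell^\star$, and $N_{\textsc{F}}$ is the number of times it returns FAIL on a leaf different from $\ell^\star$. *)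

theory Defs
  imports Complex_Main
begin

text \<open>Nodes of the complete binary tree of dyadic intervals: (d, k) is the
interval [k/2^d, (k+1)/2^d) at depth d. Rounds are indexed 0, ..., T-1.\<close>

type_synonym node = "nat \<times> nat"

definition lft :: "node \<Rightarrow> real" where
  "lft I = real (snd I) / 2 ^ fst I"

definition rgt :: "node \<Rightarrow> real" where
  "rgt I = (real (snd I) + 1) / 2 ^ fst I"

definition midp :: "node \<Rightarrow> real" where
  "midp I = (lft I + rgt I) / 2"

definition parent :: "node \<Rightarrow> node" where
  "parent I = (fst I - 1, snd I div 2)"

definition lchild :: "node \<Rightarrow> node" where
  "lchild I = (Suc (fst I), 2 * snd I)"

definition rchild :: "node \<Rightarrow> node" where
  "rchild I = (Suc (fst I), 2 * snd I + 1)"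

text \<open>Algorithm state at the start of a round:
  ChkL I      : about to post L of the safety check at I;
  ChkR I b    : about to post R of the safety check at I, b = whether the L query passed;
  Mid I       : check passed, about to post the midpoint M of I;
  Com l       : commitment subroutine running on leaf l.\<close>

datatype st = ChkL node | ChkR node bool | Mid node | Com node

definition enter :: "nat \<Rightarrow> node \<Rightarrow> st" where
  "enter D J = (if fst J = D then Com J else ChkL J)"

text \<open>The commitment subroutine is arbitrary: in round t it either posts price p t,
  or returns FAIL (fl t) before posting. A FAIL consumes no round; the algorithm then
  immediately starts the safety check at the parent in the same round. (The root has
  no parent, so a FAIL on the root -- possible only when D = 0 -- is not possible.)\<close>

definition fails :: "(nat \<Rightarrow> bool) \<Rightarrow> st \<Rightarrow> nat \<Rightarrow> bool" where
  "fails fl s t = (case s of Com l \<Rightarrow> fl t \<and> 0 < fst l | _ \<Rightarrow> False)"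

definition posted :: "(nat \<Rightarrow> real) \<Rightarrow> (nat \<Rightarrow> bool) \<Rightarrow> st \<Rightarrow> nat \<Rightarrow> real" where
  "posted p fl s t = (case s of
      ChkL I \<Rightarrow> lft I
    | ChkR I b \<Rightarrow> rgt I
    | Mid I \<Rightarrow> midp I
    | Com l \<Rightarrow> (if fails fl s t then lft (parent l) else p t))"

definition nxt :: "nat \<Rightarrow> (nat \<Rightarrow> bool) \<Rightarrow> (nat \<Rightarrow> bool) \<Rightarrow> st \<Rightarrow> nat \<Rightarrow> st" where
  "nxt D fl obs s t = (case s of
      ChkL I \<Rightarrow> ChkR I (lft I = 0 \<or> obs t)
    | ChkR I b \<Rightarrow> (if b \<and> (rgt I = 1 \<or> \<not> obs t) then Mid I else enter D (parent I))
    | Mid I \<Rightarrow> (if obs t then enter D (rchild I) else enter D (lchild I))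
    | Com l \<Rightarrow> (if fails fl s t then ChkR (parent l) (lft (parent l) = 0 \<or> obs t) else Com l))"

primrec state :: "nat \<Rightarrow> (nat \<Rightarrow> bool) \<Rightarrow> (nat \<Rightarrow> bool) \<Rightarrow> nat \<Rightarrow> st" where
  "state D fl obs 0 = enter D (0, 0)"
| "state D fl obs (Suc t) = nxt D fl obs (state D fl obs t) t"

definition price :: "nat \<Rightarrow> (nat \<Rightarrow> real) \<Rightarrow> (nat \<Rightarrow> bool) \<Rightarrow> (nat \<Rightarrow> bool) \<Rightarrow> nat \<Rightarrow> real" where
  "price D p fl obs t = posted p fl (state D fl obs t) t"

definition revenue :: "real \<Rightarrow> real \<Rightarrow> real" where
  "revenue v q = (if q \<le> v then q else 0)"

definition leaves :: "nat \<Rightarrow> node set" where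
  "leaves D = {(D, k) | k. k < 2 ^ D}"

definition true_leaf :: "nat \<Rightarrow> real \<Rightarrow> node" where
  "true_leaf D v = (D, nat \<lfloor>v * 2 ^ D\<rfloor>)"

definition commit_rounds :: "nat \<Rightarrow> (nat \<Rightarrow> bool) \<Rightarrow> (nat \<Rightarrow> bool) \<Rightarrow> nat \<Rightarrow> node \<Rightarrow> nat set" where
  "commit_rounds D fl obs T l =
     {t. t < T \<and> state D fl obs t = Com l \<and> \<not> fails fl (state D fl obs t) t}"

definition leaf_regret ::
  "nat \<Rightarrow> (nat \<Rightarrow> real) \<Rightarrow> (nat \<Rightarrow> bool) \<Rightarrow> (nat \<Rightarrow> bool) \<Rightarrow> real \<Rightarrow> nat \<Rightarrow> node \<Rightarrow> real" where
  "leaf_regret D p fl obs v T l =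
     (\<Sum>t\<in>commit_rounds D fl obs T l. v - revenue v (price D p fl obs t))"

definition n_fail_true :: "nat \<Rightarrow> (nat \<Rightarrow> bool) \<Rightarrow> (nat \<Rightarrow> bool) \<Rightarrow> real \<Rightarrow> nat \<Rightarrow> nat" where
  "n_fail_true D fl obs v T =
     card {t. t < T \<and> fails fl (state D fl obs t) t \<and> state D fl obs t = Com (true_leaf D v)}"

definition n_fail_false :: "nat \<Rightarrow> (nat \<Rightarrow> bool) \<Rightarrow> (nat \<Rightarrow> bool) \<Rightarrow> real \<Rightarrow> nat \<Rightarrow> nat" where
  "n_fail_false D fl obs v T =
     card {t. t < T \<and> fails fl (state D fl obs t) t \<and> state D fl obs t \<noteq> Com (true_leaf D v)}"

definition regret :: "nat \<Rightarrow> (nat \<Rightarrow> real) \<Rightarrow> (nat \<Rightarrow> bool) \<Rightarrow> (nat \<Rightarrow> bool) \<Rightarrow> real \<Rightarrow> nat \<Rightarrow> real" where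
  "regret D p fl obs v T = real T * v - (\<Sum>t<T. revenue v (price D p fl obs t))"

definition corruptions :: "nat \<Rightarrow> (nat \<Rightarrow> real) \<Rightarrow> (nat \<Rightarrow> bool) \<Rightarrow> (nat \<Rightarrow> bool) \<Rightarrow> real \<Rightarrow> nat \<Rightarrow> nat" where
  "corruptions D p fl obs v T = card {t. t < T \<and> obs t \<noteq> (price D p fl obs t \<le> v)}"

end

theory Submission
  imports Defs
begin

(* Let dist I be the length of the tree path from node I to the true leaf l*.  Without
   corruption the algorithm never moves away from l*: a safety check fails only at a node not
   containing v, whose parent is one step closer, and a descent from a node containing v goes to
   the child containing v.  A FAIL on a wrong leaf also moves one step closer, whereas a corrupted
   round or a FAIL on l* moves at most one step away.  So dist, corrected by one unit while a
   wrong decision is pending, starts at D, stays nonnegative, and its telescoped balance gives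
   the bound on wrong FAILs.  For the regret, 3 dist plus offsets for the three rounds spent on
   each level drops by at least one in every round outside the commitment subroutine, up to an
   increase of 6 per corrupted round and 3 per FAIL on l*, and each such round costs at most 1. *)

definition contains :: "real \<Rightarrow> node \<Rightarrow> bool" where
  "contains v I \<longleftrightarrow> lft I \<le> v \<and> v < rgt I"

definition in_tree :: "node \<Rightarrow> bool" where
  "in_tree I \<longleftrightarrow> snd I < 2 ^ fst I"

lemma lft_nonneg: "0 \<le> lft I"
  by (simp add: lft_def)

lemma lft_less_midp: "lft I < midp I" and midp_less_rgt: "midp I < rgt I"
  by (auto simp: lft_def rgt_def midp_def field_simps)

lemma midp_nonneg: "0 \<le> midp I"
  using lft_nonneg lft_less_midp by (rule order.trans[OF _ less_imp_le])

lemma rgt_nonneg: "0 \<le> rgt I"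
  using midp_nonneg midp_less_rgt by (rule order.trans[OF _ less_imp_le])

lemma rgt_le_one: "in_tree I \<Longrightarrow> rgt I \<le> 1"
proof -
  assume "in_tree I"
  then have "real (snd I) + 1 \<le> 2 ^ fst I"
    unfolding in_tree_def by (metis Suc_leI of_nat_Suc of_nat_le_iff of_nat_numeral of_nat_power add.commute)
  then show ?thesis
    by (simp add: rgt_def)
qed

lemma lft_lchild: "lft (lchild I) = lft I" and rgt_lchild: "rgt (lchild I) = midp I"
  and lft_rchild: "lft (rchild I) = midp I" and rgt_rchild: "rgt (rchild I) = rgt I"
  by (auto simp: lft_def rgt_def midp_def lchild_def rchild_def field_simps)

lemma contains_lchild: "contains v (lchild I) \<longleftrightarrow> contains v I \<and> v < midp I"
  and contains_rchild: "contains v (rchild I) \<longleftrightarrow> contains v I \<and> midp I \<le> v"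
  using lft_less_midp[of I] midp_less_rgt[of I]
  by (auto simp: contains_def lft_lchild rgt_lchild lft_rchild rgt_rchild)

lemma parent_lchild: "parent (lchild I) = I" and parent_rchild: "parent (rchild I) = I"
  by (auto simp: parent_def lchild_def rchild_def)

lemma fst_lchild: "fst (lchild I) = Suc (fst I)" and fst_rchild: "fst (rchild I) = Suc (fst I)"
  by (auto simp: lchild_def rchild_def)

lemma fst_parent: "fst (parent I) = fst I - 1"
  by (simp add: parent_def)

lemma in_tree_lchild: "in_tree I \<Longrightarrow> in_tree (lchild I)"
  and in_tree_rchild: "in_tree I \<Longrightarrow> in_tree (rchild I)"
  by (auto simp: in_tree_def lchild_def rchild_def)

lemma in_tree_parent: "in_tree I \<Longrightarrow> in_tree (parent I)"
  by (cases "fst I") (auto simp: in_tree_def parent_def)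

lemma in_tree_depth_0: "in_tree I \<Longrightarrow> fst I = 0 \<Longrightarrow> I = (0, 0)"
  by (cases I) (auto simp: in_tree_def)

lemma contains_root: "0 \<le> v \<Longrightarrow> v < 1 \<Longrightarrow> contains v (0, 0)"
  by (simp add: contains_def lft_def rgt_def)

lemma contains_parent:
  assumes "0 < fst I" "contains v I"
  shows "contains v (parent I)"
proof -
  obtain d k where I: "I = (Suc d, k)"
    using assms(1) by (cases I) (auto simp: gr0_conv_Suc)
  have "k div 2 * 2 \<le> k" "k + 1 \<le> (k div 2 + 1) * 2"
    by presburger+
  then have "real (k div 2 * 2) \<le> real k" "real (k + 1) \<le> real ((k div 2 + 1) * 2)"
    by (simp_all only: of_nat_le_iff)
  then have "real (k div 2) * 2 / 2 ^ Suc d \<le> real k / 2 ^ Suc d"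
    "(real k + 1) / 2 ^ Suc d \<le> (real (k div 2) + 1) * 2 / 2 ^ Suc d"
    by (intro divide_right_mono; simp)+
  then have "lft (parent I) \<le> lft I" "rgt I \<le> rgt (parent I)"
    by (simp_all add: I lft_def rgt_def parent_def field_simps)
  with assms(2) show ?thesis
    by (auto simp: contains_def)
qed

lemma contains_leaf_iff:
  assumes "fst l = D" "0 \<le> v"
  shows "contains v l \<longleftrightarrow> l = true_leaf D v"
proof -
  obtain k where l: "l = (D, k)"
    using assms(1) by (cases l) auto
  have "contains v l \<longleftrightarrow> real k \<le> v * 2 ^ D \<and> v * 2 ^ D < real k + 1"
    by (simp add: l contains_def lft_def rgt_def field_simps)
  also have "\<dots> \<longleftrightarrow> \<lfloor>v * 2 ^ D\<rfloor> = int k"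
    by (simp add: floor_eq_iff)
  also have "\<dots> \<longleftrightarrow> nat \<lfloor>v * 2 ^ D\<rfloor> = k"
    using assms(2) by auto
  finally show ?thesis
    by (auto simp: l true_leaf_def)
qed

(* Up from I to its lowest ancestor containing v, then down to depth D; the root counts as
   containing v, as it does for v in [0,1). *)
fun tree_dist :: "nat \<Rightarrow> real \<Rightarrow> node \<Rightarrow> nat" where
  "tree_dist D v (0, k) = D"
| "tree_dist D v (Suc d, k) =
     (if contains v (Suc d, k) then D - Suc d else Suc (tree_dist D v (d, k div 2)))"

lemma tree_dist_contains: "contains v I \<Longrightarrow> tree_dist D v I = D - fst I"
  by (cases "(D, v, I)" rule: tree_dist.cases) auto

lemma tree_dist_not_contains:
  "0 < fst I \<Longrightarrow> \<not> contains v I \<Longrightarrow> tree_dist D v I = Suc (tree_dist D v (parent I))"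
  by (cases "(D, v, I)" rule: tree_dist.cases) (auto simp: parent_def)

lemma depth_pos_if_not_contains:
  "in_tree I \<Longrightarrow> 0 \<le> v \<Longrightarrow> v < 1 \<Longrightarrow> \<not> contains v I \<Longrightarrow> 0 < fst I"
  using in_tree_depth_0 contains_root by (metis gr0I)

lemma tree_dist_parent_le:
  assumes "in_tree I" "fst I \<le> D" "0 \<le> v" "v < 1"
  shows "tree_dist D v (parent I) \<le> tree_dist D v I + 1"
proof (cases "contains v I")
  case True
  show ?thesis
  proof (cases "fst I")
    case 0
    then show ?thesis
      using in_tree_depth_0[OF assms(1)] by (simp add: parent_def)
  next
    case (Suc d)
    then have "contains v (parent I)"
      using contains_parent True by simp
    then show ?thesis
      using True Suc assms(2) by (simp add: tree_dist_contains fst_parent)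
  qed
next
  case False
  then show ?thesis
    using depth_pos_if_not_contains[OF assms(1,3,4)] by (simp add: tree_dist_not_contains)
qed

lemma tree_dist_parent_eq:
  assumes "0 < fst J" "fst J \<le> D" "contains v J"
  shows "tree_dist D v J + 1 = tree_dist D v (parent J)"
  using assms contains_parent[OF assms(1,3)] by (simp add: tree_dist_contains fst_parent)

lemma tree_dist_le_parent:
  assumes "0 < fst J" "fst J \<le> D"
  shows "tree_dist D v J \<le> tree_dist D v (parent J) + 1"
  using assms tree_dist_parent_eq[OF assms, of v]
  by (cases "contains v J") (auto simp: tree_dist_not_contains)

lemma tree_dist_pos:
  assumes "in_tree I" "fst I < D" "0 \<le> v" "v < 1"
  shows "1 \<le> tree_dist D v I"
  using assms depth_pos_if_not_contains[OF assms(1,3,4)]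
  by (cases "contains v I") (auto simp: tree_dist_contains tree_dist_not_contains)

fun wf_state :: "nat \<Rightarrow> st \<Rightarrow> bool" where
  "wf_state D (ChkL I) \<longleftrightarrow> in_tree I \<and> fst I < D"
| "wf_state D (ChkR I b) \<longleftrightarrow> in_tree I \<and> fst I < D"
| "wf_state D (Mid I) \<longleftrightarrow> in_tree I \<and> fst I < D"
| "wf_state D (Com l) \<longleftrightarrow> in_tree l \<and> fst l = D"

fun committing :: "(nat \<Rightarrow> bool) \<Rightarrow> st \<Rightarrow> nat \<Rightarrow> bool" where
  "committing fl (Com l) t \<longleftrightarrow> \<not> fails fl (Com l) t"
| "committing fl _ t \<longleftrightarrow> False"

(* The extra unit at ChkR and Mid pays in advance for the step away from the true leaf that a
   wrong check result, or a descent from a node not containing v, is about to cause. *)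
fun fail_potential :: "nat \<Rightarrow> real \<Rightarrow> st \<Rightarrow> nat" where
  "fail_potential D v (ChkL I) = tree_dist D v I"
| "fail_potential D v (ChkR I b) = tree_dist D v I + of_bool (b \<noteq> (lft I \<le> v))"
| "fail_potential D v (Mid I) = tree_dist D v I + of_bool (\<not> contains v I)"
| "fail_potential D v (Com l) = tree_dist D v l"

fun round_potential :: "nat \<Rightarrow> real \<Rightarrow> st \<Rightarrow> int" where
  "round_potential D v (ChkL I) = 3 * int (tree_dist D v I)"
| "round_potential D v (ChkR I b) =
     3 * int (tree_dist D v I) + (if b = (lft I \<le> v) then -1 else 5)"
| "round_potential D v (Mid I) = 3 * int (tree_dist D v I) + (if contains v I then -2 else 4)"
| "round_potential D v (Com l) = 3 * int (tree_dist D v l)"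

lemma wf_state_enter: "in_tree J \<Longrightarrow> fst J \<le> D \<Longrightarrow> wf_state D (enter D J)"
  by (auto simp: enter_def)

lemma fail_potential_enter: "fail_potential D v (enter D J) = tree_dist D v J"
  and round_potential_enter: "round_potential D v (enter D J) = 3 * int (tree_dist D v J)"
  by (auto simp: enter_def)

lemma wf_state_nxt:
  assumes "wf_state D s"
  shows "wf_state D (nxt D fl obs s t)"
proof (cases s)
  case (ChkL I)
  then show ?thesis
    using assms by (auto simp: nxt_def)
next
  case (ChkR I b)
  then have "wf_state D (enter D (parent I))"
    using assms ChkR by (intro wf_state_enter in_tree_parent) (auto simp: fst_parent)
  then show ?thesis
    using ChkR assms by (auto simp: nxt_def)
next
  case (Mid I)
  then have "in_tree I" "fst I < D"
    using assms by simp_all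
  then have "wf_state D (enter D (lchild I))" "wf_state D (enter D (rchild I))"
    by (auto intro!: wf_state_enter in_tree_lchild in_tree_rchild simp: fst_lchild fst_rchild)
  then show ?thesis
    using Mid by (auto simp: nxt_def)
next
  case (Com l)
  then show ?thesis
    using assms by (auto simp: nxt_def fails_def fst_parent in_tree_parent)
qed

lemma wf_state_state: "wf_state D (state D fl obs t)"
  by (induction t) (auto intro: wf_state_enter wf_state_nxt simp: in_tree_def)

lemma round_potential_nonneg:
  assumes "wf_state D s" "0 \<le> v" "v < 1"
  shows "0 \<le> round_potential D v s"
  using assms tree_dist_pos[of _ D v]
  by (cases s) fastforce+

lemma potentials_step_ChkL:
  fixes obs :: "nat \<Rightarrow> bool" and I :: node and t :: nat
  assumes "0 \<le> v"
  defines "corrupt \<equiv> obs t \<noteq> (lft I \<le> v)"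
  shows "fail_potential D v (nxt D fl obs (ChkL I) t) \<le> fail_potential D v (ChkL I) + of_bool corrupt"
    and "round_potential D v (nxt D fl obs (ChkL I) t) + 1
           \<le> round_potential D v (ChkL I) + 6 * of_bool corrupt"
  using assms by (auto simp: nxt_def corrupt_def)

lemma potentials_step_ChkR:
  fixes obs :: "nat \<Rightarrow> bool" and I :: node and t :: nat
  assumes "in_tree I" "fst I < D" "0 \<le> v" "v < 1"
  defines "corrupt \<equiv> obs t \<noteq> (rgt I \<le> v)"
  shows "fail_potential D v (nxt D fl obs (ChkR I b) t)
           \<le> fail_potential D v (ChkR I b) + of_bool corrupt"
    and "round_potential D v (nxt D fl obs (ChkR I b) t) + 1
           \<le> round_potential D v (ChkR I b) + 6 * of_bool corrupt"
proof -
  have up: "tree_dist D v (parent I) \<le> tree_dist D v I + 1"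
    using tree_dist_parent_le assms by simp
  have up_not_contains: "tree_dist D v I = tree_dist D v (parent I) + 1" if "\<not> contains v I"
    using that depth_pos_if_not_contains tree_dist_not_contains assms by simp
  have "rgt I \<le> 1"
    using rgt_le_one assms(1) .
  then show "fail_potential D v (nxt D fl obs (ChkR I b) t)
           \<le> fail_potential D v (ChkR I b) + of_bool corrupt"
    and "round_potential D v (nxt D fl obs (ChkR I b) t) + 1
           \<le> round_potential D v (ChkR I b) + 6 * of_bool corrupt"
    using up up_not_contains assms(4)
    by (auto simp: nxt_def fail_potential_enter
        round_potential_enter corrupt_def contains_def)
qed

lemma potentials_step_Mid:
  fixes obs :: "nat \<Rightarrow> bool" and I :: node and t :: nat and v :: real
  assumes "fst I < D"
  defines "corrupt \<equiv> obs t \<noteq> (midp I \<le> v)"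
  shows "fail_potential D v (nxt D fl obs (Mid I) t) \<le> fail_potential D v (Mid I) + of_bool corrupt"
    and "round_potential D v (nxt D fl obs (Mid I) t) + 1
           \<le> round_potential D v (Mid I) + 6 * of_bool corrupt"
proof -
  have "0 < fst (lchild I)" "fst (lchild I) \<le> D" "0 < fst (rchild I)" "fst (rchild I) \<le> D"
    using assms(1) by (simp_all add: fst_lchild fst_rchild)
  note left = tree_dist_le_parent[OF this(1,2), where v = v, unfolded parent_lchild]
    tree_dist_parent_eq[OF this(1,2), where v = v, unfolded parent_lchild]
    and right = tree_dist_le_parent[OF this(3,4), where v = v, unfolded parent_rchild]
    tree_dist_parent_eq[OF this(3,4), where v = v, unfolded parent_rchild]
  show "fail_potential D v (nxt D fl obs (Mid I) t) \<le> fail_potential D v (Mid I) + of_bool corrupt"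
    and "round_potential D v (nxt D fl obs (Mid I) t) + 1
           \<le> round_potential D v (Mid I) + 6 * of_bool corrupt"
    using left right
    by (auto simp: nxt_def fail_potential_enter round_potential_enter corrupt_def
        contains_lchild contains_rchild)
qed

lemma potentials_step_Com:
  fixes obs fl :: "nat \<Rightarrow> bool" and p :: "nat \<Rightarrow> real" and l :: node and t :: nat
  assumes "fst l = D" "0 \<le> v"
  defines "corrupt \<equiv> obs t \<noteq> (posted p fl (Com l) t \<le> v)"
    and "true_fail \<equiv> fails fl (Com l) t \<and> l = true_leaf D v"
    and "false_fail \<equiv> fails fl (Com l) t \<and> l \<noteq> true_leaf D v"
  shows "fail_potential D v (nxt D fl obs (Com l) t) + of_bool false_fail
           \<le> fail_potential D v (Com l) + of_bool true_fail + of_bool corrupt"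
    and "round_potential D v (nxt D fl obs (Com l) t) + of_bool (fails fl (Com l) t)
           \<le> round_potential D v (Com l) + 3 * of_bool true_fail + 6 * of_bool corrupt"
proof -
  define P where "P = parent l"
  have step: "nxt D fl obs (Com l) t = (if fails fl (Com l) t then ChkR P (lft P = 0 \<or> obs t) else Com l)"
    by (simp add: nxt_def P_def)
  have corrupt: "corrupt \<longleftrightarrow> obs t \<noteq> (lft P \<le> v)" if "fails fl (Com l) t"
    using that by (simp add: posted_def corrupt_def P_def)
  have depth: "0 < fst l" if "fails fl (Com l) t"
    using that by (simp add: fails_def)
  have dist_true: "tree_dist D v l = 0 \<and> tree_dist D v P = 1"
    if "fails fl (Com l) t" "l = true_leaf D v"
    using that contains_leaf_iff[OF assms(1,2)] tree_dist_parent_eq[OF depth, where D = D and v = v] assms(1)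
    by (simp add: tree_dist_contains P_def)
  have dist_false: "tree_dist D v l = tree_dist D v P + 1"
    if "fails fl (Com l) t" "l \<noteq> true_leaf D v"
    using that contains_leaf_iff[OF assms(1,2)] tree_dist_not_contains[OF depth]
    by (simp add: P_def)
  show "fail_potential D v (nxt D fl obs (Com l) t) + of_bool false_fail
           \<le> fail_potential D v (Com l) + of_bool true_fail + of_bool corrupt"
    and "round_potential D v (nxt D fl obs (Com l) t) + of_bool (fails fl (Com l) t)
           \<le> round_potential D v (Com l) + 3 * of_bool true_fail + 6 * of_bool corrupt"
    using corrupt dist_true dist_false lft_nonneg[of P] assms(2)
    by (auto simp: step true_fail_def false_fail_def)
qed

lemma fail_potential_step:
  assumes "wf_state D s" "0 \<le> v" "v < 1"
  shows "fail_potential D v (nxt D fl obs s t) + of_bool (fails fl s t \<and> s \<noteq> Com (true_leaf D v))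
    \<le> fail_potential D v s + of_bool (fails fl s t \<and> s = Com (true_leaf D v))
       + of_bool (obs t \<noteq> (posted p fl s t \<le> v))"
proof (cases s)
  case (ChkL I)
  then show ?thesis
    using potentials_step_ChkL(1)[OF assms(2), where obs = obs and t = t and I = I and fl = fl]
    by (simp add: fails_def posted_def)
next
  case (ChkR I b)
  then show ?thesis
    using assms potentials_step_ChkR(1)[where obs = obs and t = t and fl = fl and b = b]
    by (simp add: fails_def posted_def)
next
  case (Mid I)
  then show ?thesis
    using assms potentials_step_Mid(1)[where obs = obs and t = t and fl = fl and v = v]
    by (simp add: fails_def posted_def)
next
  case (Com l)
  then show ?thesis
    using assms potentials_step_Com(1)[where obs = obs and t = t and fl = fl and p = p]
    by auto
qed

lemma round_potential_step:
  assumes "wf_state D s" "0 \<le> v" "v < 1"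
  shows "round_potential D v (nxt D fl obs s t) + of_bool (\<not> committing fl s t)
    \<le> round_potential D v s + 3 * of_bool (fails fl s t \<and> s = Com (true_leaf D v))
       + 6 * of_bool (obs t \<noteq> (posted p fl s t \<le> v))"
proof (cases s)
  case (ChkL I)
  then show ?thesis
    using potentials_step_ChkL(2)[OF assms(2), where obs = obs and t = t and I = I and fl = fl]
    by (simp add: fails_def posted_def)
next
  case (ChkR I b)
  then show ?thesis
    using assms potentials_step_ChkR(2)[where obs = obs and t = t and fl = fl and b = b]
    by (simp add: fails_def posted_def)
next
  case (Mid I)
  then show ?thesis
    using assms potentials_step_Mid(2)[where obs = obs and t = t and fl = fl and v = v]
    by (simp add: fails_def posted_def)
next
  case (Com l)
  then show ?thesis
    using assms potentials_step_Com(2)[where obs = obs and t = t and fl = fl and p = p]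
    by auto
qed

lemma potential_telescope:
  fixes f a b :: "nat \<Rightarrow> 'a::ordered_ab_semigroup_monoid_add_imp_le"
  assumes "\<And>t. t < T \<Longrightarrow> f (Suc t) + a t \<le> f t + b t"
  shows "f T + (\<Sum>t<T. a t) \<le> f 0 + (\<Sum>t<T. b t)"
  using assms
proof (induction T)
  case 0
  then show ?case by simp
next
  case (Suc T)
  then have "f (Suc T) + a T \<le> f T + b T" "f T + (\<Sum>t<T. a t) \<le> f 0 + (\<Sum>t<T. b t)"
    by simp_all
  then have "f T + (f (Suc T) + (\<Sum>t<Suc T. a t)) \<le> f T + (f 0 + (\<Sum>t<Suc T. b t))"
    using add_mono by (fastforce simp: ac_simps)
  then show ?case
    by simp
qed

lemma sum_of_bool_lessThan:
  "(\<Sum>t<T. of_bool (P t)) = of_nat (card {t. t < T \<and> P t})"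
  for T :: nat
  by (simp add: Int_def)

lemma false_fails_le:
  assumes "0 \<le> v" "v < 1"
  shows "n_fail_false D fl obs v T \<le> D + corruptions D p fl obs v T + n_fail_true D fl obs v T"
proof -
  let ?s = "state D fl obs"
  have "fail_potential D v (?s T) + (\<Sum>t<T. of_bool (fails fl (?s t) t \<and> ?s t \<noteq> Com (true_leaf D v)))
    \<le> fail_potential D v (?s 0) + (\<Sum>t<T. of_bool (fails fl (?s t) t \<and> ?s t = Com (true_leaf D v))
         + of_bool (obs t \<noteq> (price D p fl obs t \<le> v)))"
    by (rule potential_telescope)
      (use fail_potential_step[OF wf_state_state assms] in \<open>simp add: price_def add.assoc\<close>)
  then show ?thesis
    by (simp add: sum.distrib sum_of_bool_lessThan fail_potential_enter n_fail_false_def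
        n_fail_true_def corruptions_def)
qed

lemma card_noncommitting_rounds_le:
  assumes "0 \<le> v" "v < 1"
  shows "card {t. t < T \<and> \<not> committing fl (state D fl obs t) t}
    \<le> 3 * D + 6 * corruptions D p fl obs v T + 3 * n_fail_true D fl obs v T"
proof -
  let ?s = "state D fl obs"
  have "round_potential D v (?s T) + (\<Sum>t<T. of_bool (\<not> committing fl (?s t) t))
    \<le> round_potential D v (?s 0) + (\<Sum>t<T. 3 * of_bool (fails fl (?s t) t \<and> ?s t = Com (true_leaf D v))
         + 6 * of_bool (obs t \<noteq> (price D p fl obs t \<le> v)))"
    by (rule potential_telescope)
      (use round_potential_step[OF wf_state_state assms] in \<open>simp add: price_def add.assoc\<close>)
  moreover have "0 \<le> round_potential D v (?s T)"
    using round_potential_nonneg[OF wf_state_state assms] .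
  ultimately show ?thesis
    by (simp add: sum.distrib sum_of_bool_lessThan round_potential_enter n_fail_true_def
        corruptions_def flip: sum_distrib_left)
qed

lemma finite_leaves: "finite (leaves D)"
proof -
  have "leaves D = Pair D ` {..<2 ^ D}"
    by (auto simp: leaves_def)
  then show ?thesis
    by simp
qed

lemma committing_rounds_eq_Union_commit_rounds:
  "{t. t < T \<and> committing fl (state D fl obs t) t} = (\<Union>l\<in>leaves D. commit_rounds D fl obs T l)"
proof -
  have "state D fl obs t = Com l \<Longrightarrow> l \<in> leaves D" for t l
    using wf_state_state[of D fl obs t] by (cases l) (auto simp: in_tree_def leaves_def)
  moreover have "committing fl s t \<longleftrightarrow> (\<exists>l. s = Com l \<and> \<not> fails fl s t)" for s t
    by (cases s) auto
  ultimately show ?thesis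
    by (auto simp: commit_rounds_def)
qed

lemma sum_leaf_regret:
  "(\<Sum>l\<in>leaves D. leaf_regret D p fl obs v T l)
    = (\<Sum>t | t < T \<and> committing fl (state D fl obs t) t. v - revenue v (price D p fl obs t))"
proof -
  have "finite (commit_rounds D fl obs T l)" for l
    by (simp add: commit_rounds_def)
  moreover have "commit_rounds D fl obs T l \<inter> commit_rounds D fl obs T l' = {}" if "l \<noteq> l'" for l l'
    using that by (auto simp: commit_rounds_def)
  ultimately show ?thesis
    by (simp add: committing_rounds_eq_Union_commit_rounds leaf_regret_def sum.UNION_disjoint
        finite_leaves)
qed

lemma price_nonneg: "\<forall>t. 0 \<le> p t \<Longrightarrow> 0 \<le> price D p fl obs t"
  by (auto simp: price_def posted_def lft_nonneg midp_nonneg rgt_nonneg split: st.split)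

lemma regret_le_leaf_regrets_plus_noncommitting:
  assumes "\<forall>t. 0 \<le> p t" "v < 1"
  shows "regret D p fl obs v T \<le> (\<Sum>l\<in>leaves D. leaf_regret D p fl obs v T l)
    + card {t. t < T \<and> \<not> committing fl (state D fl obs t) t}"
proof -
  let ?loss = "\<lambda>t. v - revenue v (price D p fl obs t)"
  let ?C = "{t. committing fl (state D fl obs t) t}"
  have "?loss t \<le> 1" for t
    using assms price_nonneg[OF assms(1), of D fl obs t] by (auto simp: revenue_def)
  then have noncommitting: "(\<Sum>t\<in>{..<T} - ?C. ?loss t) \<le> card ({..<T} - ?C)"
    using sum_bounded_above[of "{..<T} - ?C" ?loss 1] by simp
  have "regret D p fl obs v T = (\<Sum>t<T. ?loss t)"
    by (simp add: regret_def sum_subtractf)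
  also have "\<dots> = (\<Sum>t\<in>{..<T} \<inter> ?C. ?loss t) + (\<Sum>t\<in>{..<T} - ?C. ?loss t)"
    by (rule sum.Int_Diff) simp
  also have "\<dots> \<le> (\<Sum>l\<in>leaves D. leaf_regret D p fl obs v T l) + card ({..<T} - ?C)"
    using noncommitting by (simp add: sum_leaf_regret Int_def)
  finally show ?thesis
    by (simp add: set_diff_eq)
qed

theorem theorem3p4:
  fixes T C D :: nat and v :: real and p :: "nat \<Rightarrow> real" and fl obs :: "nat \<Rightarrow> bool"
  assumes "D = nat \<lceil>log 2 (real T)\<rceil>"
    and "0 \<le> v" and "v < 1"
    and "\<forall>t. 0 \<le> p t \<and> p t \<le> 1"
    and "corruptions D p fl obs v T \<le> C"
  shows "real (n_fail_false D fl obs v T) \<le> real D + real C + real (n_fail_true D fl obs v T)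
       \<and> regret D p fl obs v T \<le> (\<Sum>l\<in>leaves D. leaf_regret D p fl obs v T l)
           + 3 * real D + 6 * real C + 3 * real (n_fail_true D fl obs v T)"
proof
  show "real (n_fail_false D fl obs v T) \<le> real D + real C + real (n_fail_true D fl obs v T)"
    using false_fails_le[OF assms(2,3), of D fl obs T p] assms(5) by linarith
next
  have "real (card {t. t < T \<and> \<not> committing fl (state D fl obs t) t})
      \<le> 3 * real D + 6 * real C + 3 * real (n_fail_true D fl obs v T)"
    using card_noncommitting_rounds_le[OF assms(2,3), of T fl D obs p] assms(5) by linarith
  moreover have "\<forall>t. 0 \<le> p t"
    using assms(4) by blast
  then have "regret D p fl obs v T \<le> (\<Sum>l\<in>leaves D. leaf_regret D p fl obs v T l)
      + card {t. t < T \<and> \<not> committing fl (state D fl obs t) t}"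
    using regret_le_leaf_regrets_plus_noncommitting assms(3) by blast
  ultimately show "regret D p fl obs v T \<le> (\<Sum>l\<in>leaves D. leaf_regret D p fl obs v T l)
      + 3 * real D + 6 * real C + 3 * real (n_fail_true D fl obs v T)"
    by linarith
qed

end
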